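(* Let $U\subset\mathbb H$ be an axially symmetric open set with $U\cap\mathbb R=\emptyset$, and let $\tilde f$ be an axially harmonic function on $U$. Suppose that $\tilde f(q)=A(q_0,r)+\underline{\omega}\,B(q_0,r)$ for $q=q_0+r\underline{\omega}\in U$, $r>0$, $\underline{\omega}\in\mathbb S$, where $A,B$ are $\mathbb H$-valued functions of class $C^2$. Then $A$ and $B$ satisfy the system $$\partial_{q_0}^2A+\partial_r^2A+\frac{2}{r}\partial_rA=0,\qquad \partial_{q_0}^2B+\partial_r^2B+\frac{2r\,\partial_rB-2B}{r^2}=0 .$$
   Context: $\mathbb H$ denotes the quaternions $q=q_0+q_1e_1+q_2e_2+q_3e_3$ with $e_1^2=e_2^2=e_3^2=-1$, $e_1e_2=-e_2e_1=e_3$, $e_2e_3=-e_3e_2=e_1$, $e_3e_1=-e_1e_3=e_2$; $\underline q=q_1e_1+q_2e_2+q_3e_3$, $\mathbb S=\{\underline q: q_1^2+q_2^2+q_3^2=1\}$. A set $U\subset\mathbb H$ is axially symmetric if $u+Iv\in U$ implies $u+Jv\in U$ for all $J\in\mathbb S$. The Fueter operator is $\mathcal D=\partial_{q_0}+\sum_{i=1}^3e_i\partial_{q_i}$ and $\Delta=\sum_{i=0}^3\partial_{q_i}^2$. A function $\tilde f$ on an axially symmetric open set $U$ (not meeting $\mathbb R$) is called axially harmonic if $\tilde f=\mathcal D f$ where $f:U\to\mathbb H$ is of class $C^3$ of the form $f(u+Jv)=\alpha(u,v)+J\beta(u,v)$ ($J\in\mathbb S$, $v>0$) with $\alpha,\beta$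 $\mathbb H$-valued, and $\Delta\tilde f=0$ on $U$. *)

theory Defs
  imports "HOL-Analysis.Analysis"
begin

text \<open>Quaternions are modelled as real^4: q = q$0 + q$1 e1 + q$2 e2 + q$3 e3.\<close>

type_synonym quat = "real^4"

definition qmult :: "quat \<Rightarrow> quat \<Rightarrow> quat" where
  "qmult p q = (\<chi> i.
     if i = 0 then p$0*q$0 - p$1*q$1 - p$2*q$2 - p$3*q$3
     else if i = 1 then p$0*q$1 + p$1*q$0 + p$2*q$3 - p$3*q$2
     else if i = 2 then p$0*q$2 - p$1*q$3 + p$2*q$0 + p$3*q$1
     else p$0*q$3 + p$1*q$2 - p$2*q$1 + p$3*q$0)"

definition e :: "4 \<Rightarrow> quat" where "e i = axis i 1"

definition qreal :: "real \<Rightarrow> quat" where "qreal x = x *\<^sub>R e 0"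

definition qS :: "quat set" where
  "qS = {q. q$0 = 0 \<and> (q$1)\<^sup>2 + (q$2)\<^sup>2 + (q$3)\<^sup>2 = 1}"

definition axially_symmetric :: "quat set \<Rightarrow> bool" where
  "axially_symmetric U \<longleftrightarrow>
     (\<forall>u v I J. I \<in> qS \<longrightarrow> J \<in> qS \<longrightarrow> qreal u + v *\<^sub>R I \<in> U \<longrightarrow> qreal u + v *\<^sub>R J \<in> U)"

definition dirderiv :: "'a::real_normed_vector \<Rightarrow> ('a \<Rightarrow> 'b::real_normed_vector) \<Rightarrow> 'a \<Rightarrow> 'b" where
  "dirderiv v g x = vector_derivative (\<lambda>t::real. g (x + t *\<^sub>R v)) (at 0)"

fun Ck :: "nat \<Rightarrow> 'a::euclidean_space set \<Rightarrow> ('a \<Rightarrow> 'b::real_normed_vector) \<Rightarrow> bool" where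
  "Ck 0 S g = continuous_on S g"
| "Ck (Suc k) S g = (continuous_on S g \<and>
     (\<forall>b\<in>Basis. (\<forall>x\<in>S. (\<lambda>t::real. g (x + t *\<^sub>R b)) differentiable (at 0))
                 \<and> Ck k S (dirderiv b g)))"

definition fueter :: "(quat \<Rightarrow> quat) \<Rightarrow> quat \<Rightarrow> quat" where
  "fueter f q = dirderiv (e 0) f q + (\<Sum>i\<in>{1,2,3}. qmult (e i) (dirderiv (e i) f q))"

definition laplace :: "(quat \<Rightarrow> quat) \<Rightarrow> quat \<Rightarrow> quat" where
  "laplace g q = (\<Sum>i\<in>UNIV. dirderiv (e i) (dirderiv (e i) g) q)"

definition axially_harmonic :: "quat set \<Rightarrow> (quat \<Rightarrow> quat) \<Rightarrow> bool" where
  "axially_harmonic U ft \<longleftrightarrow>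
     (\<exists>f (\<alpha>::real \<Rightarrow> real \<Rightarrow> quat) (\<beta>::real \<Rightarrow> real \<Rightarrow> quat).
        Ck 3 U f \<and>
        (\<forall>u v J. J \<in> qS \<longrightarrow> v > 0 \<longrightarrow> qreal u + v *\<^sub>R J \<in> U \<longrightarrow>
            f (qreal u + v *\<^sub>R J) = \<alpha> u v + qmult J (\<beta> u v)) \<and>
        (\<forall>q\<in>U. ft q = fueter f q)) \<and>
     (\<forall>q\<in>U. laplace ft q = 0)"

end

theory Submission
  imports Defs
begin

(* Write q = q0 + r w with w in S. Along the real direction, ft (q + t) = A (q0 + t, r) + w B (q0 + t, r).
   Along an imaginary unit e_i, q + t e_i = q0 + y with y imaginary and
   ft (q0 + y) = A (q0, |y|) + y B (q0, |y|) / |y|, a radial function plus y times a radial function.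
   Since d|y|/dt = w_i and d^2|y|/dt^2 = (1 - w_i^2) / r at t = 0, the chain rule together with
   sum_i w_i^2 = 1 and sum_i w_i e_i = w gives
     Delta ft (q0 + r w) = L_A (q0, r) + w L_B (q0, r),
   where L_A, L_B are the two left-hand sides of the claimed system. Harmonicity at q0 + r w and,
   by axial symmetry, at q0 - r w gives L_A + w L_B = 0 = L_A - w L_B; hence L_A = 0 and w L_B = 0,
   and L_B = 0 because w^2 = -1. *)

lemma four_eq_zero_4 [simp]: "(4::4) = 0"
  by simp

lemma qmult_bounded_bilinear: "bounded_bilinear qmult"
proof -
  have "bilinear qmult"
    unfolding bilinear_def
    by (auto intro!: linearI simp: vec_eq_iff qmult_def algebra_simps)
  then show ?thesis
    by (simp add: bilinear_conv_bounded_bilinear)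
qed

lemma norm_quat: "norm (q::quat) = sqrt ((q$0)\<^sup>2 + (q$1)\<^sup>2 + (q$2)\<^sup>2 + (q$3)\<^sup>2)"
  by (simp add: norm_vec_def L2_set_def sum_4 ac_simps)

lemma qS_iff: "w \<in> qS \<longleftrightarrow> w$0 = 0 \<and> norm w = 1"
  by (auto simp: qS_def norm_quat)

lemma inner_e: "x \<bullet> e i = x$i"
  by (simp add: e_def inner_axis)

lemma qmult_qS_qmult_qS:
  assumes "w \<in> qS" shows "qmult w (qmult w y) = - y"
  using assms unfolding qS_def
  by (auto simp: vec_eq_iff forall_4 qmult_def) algebra+

lemma eq_0_if_qS_both_signs:
  assumes "w \<in> qS" and plus: "x + qmult w y = 0" and minus: "x + qmult (- w) y = 0"
  shows "x = 0" and "y = 0"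
proof -
  have "qmult (- w) y = - qmult w y"
    by (rule bounded_bilinear.minus_left[OF qmult_bounded_bilinear])
  then have x: "x = qmult w y"
    using minus by simp
  then have "2 *\<^sub>R qmult w y = 0"
    using plus by (simp add: scaleR_2)
  then have wy: "qmult w y = 0"
    by simp
  then show "x = 0"
    using x by simp
  have "y = - qmult w (qmult w y)"
    using qmult_qS_qmult_qS[OF assms(1)] by simp
  with wy show "y = 0"
    by (simp add: bounded_bilinear.zero_right[OF qmult_bounded_bilinear])
qed

lemma qS_sum_sq: "w \<in> qS \<Longrightarrow> (\<Sum>i\<in>{1,2,3}. (w$i)\<^sup>2) = 1"
  by (simp add: qS_def)

lemma qS_sum_e: "w \<in> qS \<Longrightarrow> (\<Sum>i\<in>{1,2,3}. w$i *\<^sub>R e i) = w"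
  by (auto simp: qS_def vec_eq_iff forall_4 e_def axis_def)

lemma has_vector_derivative_at_shift:
  assumes "(g has_vector_derivative D) (at (s + t))"
  shows "((\<lambda>t. g (s + t)) has_vector_derivative D) (at t)"
proof -
  have "((\<lambda>t::real. s + t) has_vector_derivative 1) (at t)"
    by (auto intro!: derivative_eq_intros)
  from vector_diff_chain_at[OF this, of g D] assms show ?thesis
    by (simp add: o_def)
qed

lemma dirderiv_eqI:
  assumes "((\<lambda>t. g (x + t *\<^sub>R v)) has_vector_derivative D) (at 0)"
  shows "dirderiv v g x = D"
  using assms unfolding dirderiv_def by (rule vector_derivative_at)

lemma dirderiv2_eqI:
  fixes f :: "'a::real_normed_vector \<Rightarrow> 'b::real_normed_vector"
  assumes "d > 0"
    and f: "\<And>t. \<bar>t\<bar> < d \<Longrightarrow> f (x + t *\<^sub>R v) = G t"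
    and G: "\<And>t. \<bar>t\<bar> < d \<Longrightarrow> (G has_vector_derivative G' t) (at t)"
    and G': "(G' has_vector_derivative G'') (at 0)"
  shows "dirderiv v (dirderiv v f) x = G''"
proof -
  have "dirderiv v f (x + s *\<^sub>R v) = G' s" if s: "\<bar>s\<bar> < d" for s
  proof (rule dirderiv_eqI)
    have shifted: "((\<lambda>t. G (s + t)) has_vector_derivative G' s) (at 0)"
      using has_vector_derivative_at_shift[of G "G' s" s 0] G[OF s] by simp
    have eq: "G (s + t) = f (x + s *\<^sub>R v + t *\<^sub>R v)" if "t \<in> ball 0 (d - \<bar>s\<bar>)" for t
    proof -
      have "\<bar>s + t\<bar> < d"
        using that by (simp add: dist_real_def)
      then show ?thesis
        by (simp add: f[symmetric] scaleR_add_left add.assoc)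
    qed
    show "((\<lambda>t. f (x + s *\<^sub>R v + t *\<^sub>R v)) has_vector_derivative G' s) (at 0)"
      by (rule has_vector_derivative_transform_within_open[OF shifted, of "ball 0 (d - \<bar>s\<bar>)"])
        (use s eq in simp_all)
  qed
  then have "G' t = dirderiv v f (x + t *\<^sub>R v)" if "t \<in> ball 0 d" for t
    using that by (simp add: dist_real_def)
  then show ?thesis
    using \<open>d > 0\<close>
    by (intro dirderiv_eqI has_vector_derivative_transform_within_open[OF G', of "ball 0 d"]) simp_all
qed

lemma has_vector_derivative_dirderiv_Ck:
  assumes "Ck (Suc k) S F" "b \<in> Basis" "x + s *\<^sub>R b \<in> S"
  shows "((\<lambda>t. F (x + t *\<^sub>R b)) has_vector_derivative dirderiv b F (x + s *\<^sub>R b)) (at s)"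
proof -
  have "(\<lambda>t. F (x + s *\<^sub>R b + t *\<^sub>R b)) differentiable (at 0)"
    using assms by auto
  then have "((\<lambda>t. F (x + s *\<^sub>R b + t *\<^sub>R b)) has_vector_derivative dirderiv b F (x + s *\<^sub>R b)) (at 0)"
    unfolding dirderiv_def by (simp add: vector_derivative_works)
  then show ?thesis
    using has_vector_derivative_at_shift[of "\<lambda>u. F (x + s *\<^sub>R b + u *\<^sub>R b)" _ "-s" s]
    by (simp add: algebra_simps)
qed

lemma has_vector_derivative_Ck2_line:
  assumes "Ck 2 S F" "b \<in> Basis" "x + s *\<^sub>R b \<in> S"
  shows "((\<lambda>t. F (x + t *\<^sub>R b)) has_vector_derivative dirderiv b F (x + s *\<^sub>R b)) (at s)"
    and "((\<lambda>t. dirderiv b F (x + t *\<^sub>R b)) has_vector_derivative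
      dirderiv b (dirderiv b F) (x + s *\<^sub>R b)) (at s)"
proof -
  have F: "Ck (Suc (Suc 0)) S F"
    using assms(1) by (simp only: numeral_2_eq_2)
  then have "Ck (Suc 0) S (dirderiv b F)"
    using assms(2) by simp
  with F show "((\<lambda>t. F (x + t *\<^sub>R b)) has_vector_derivative dirderiv b F (x + s *\<^sub>R b)) (at s)"
    and "((\<lambda>t. dirderiv b F (x + t *\<^sub>R b)) has_vector_derivative
      dirderiv b (dirderiv b F) (x + s *\<^sub>R b)) (at s)"
    using has_vector_derivative_dirderiv_Ck assms(2,3) by blast+
qed

lemma has_real_derivative_norm_line:
  fixes x v :: "'a::real_inner"
  assumes "x + t *\<^sub>R v \<noteq> 0"
  shows "((\<lambda>t. norm (x + t *\<^sub>R v)) has_real_derivative ((x + t *\<^sub>R v) \<bullet> v) / norm (x + t *\<^sub>R v)) (at t)"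
proof -
  have "((\<lambda>t. x + t *\<^sub>R v) has_derivative (\<lambda>h. h *\<^sub>R v)) (at t)"
    by (auto intro!: derivative_eq_intros)
  from has_derivative_compose[OF this has_derivative_norm[OF assms]]
  have "((\<lambda>t. norm (x + t *\<^sub>R v)) has_derivative (\<lambda>h. h * (v \<bullet> sgn (x + t *\<^sub>R v)))) (at t)"
    by simp
  then show ?thesis
    unfolding has_field_derivative_def
    by (rule has_derivative_eq_rhs) (simp add: fun_eq_iff sgn_div_norm inner_commute divide_inverse)
qed

lemma has_real_derivative_norm_line_deriv:
  fixes x v :: "'a::real_inner"
  assumes "norm v = 1" and "x \<noteq> 0"
  shows "((\<lambda>t. (x \<bullet> v + t) / norm (x + t *\<^sub>R v)) has_real_derivative
    ((norm x)\<^sup>2 - (x \<bullet> v)\<^sup>2) / norm x ^ 3) (at 0)"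
proof -
  have "v \<bullet> v = 1"
    using assms(1) by (simp add: power2_norm_eq_inner[symmetric])
  then have "((\<lambda>t. norm (x + t *\<^sub>R v)) has_real_derivative (x \<bullet> v) / norm x) (at 0)"
    using has_real_derivative_norm_line[of x 0 v] assms(2) by simp
  then show ?thesis
    using assms(2)
    by (auto intro!: derivative_eq_intros simp: power2_eq_square power3_eq_cube field_simps)
qed

lemma has_vector_derivative_comp_real:
  assumes "(\<rho> has_real_derivative \<rho>') (at t)" "(a has_vector_derivative a') (at (\<rho> t))"
  shows "((\<lambda>t. a (\<rho> t)) has_vector_derivative \<rho>' *\<^sub>R a') (at t)"
  using vector_diff_chain_at[of \<rho> \<rho>' t a a'] assms
  by (simp add: o_def has_real_derivative_iff_has_vector_derivative)

text \<open>Here \<open>c\<close> and \<open>(1 - c\<^sup>2) / r\<close> are the first and second derivatives of \<open>t \<mapsto> norm (x + t *\<^sub>R v)\<close> at \<open>0\<close>.\<close>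

lemma dirderiv2_radial:
  fixes f :: "'a::real_inner \<Rightarrow> 'b::real_normed_vector" and prod :: "'a \<Rightarrow> 'b \<Rightarrow> 'b"
    and a k a' k' :: "real \<Rightarrow> 'b"
  assumes prod: "bounded_bilinear prod" and "d > 0"
    and v: "norm v = 1" and r: "norm x = r" and c: "x \<bullet> v = c * r"
    and nz: "\<And>t. \<bar>t\<bar> < d \<Longrightarrow> x + t *\<^sub>R v \<noteq> 0"
    and f: "\<And>t. \<bar>t\<bar> < d \<Longrightarrow>
      f (y + t *\<^sub>R v) = a (norm (x + t *\<^sub>R v)) + prod (x + t *\<^sub>R v) (k (norm (x + t *\<^sub>R v)))"
    and a: "\<And>t. \<bar>t\<bar> < d \<Longrightarrow>
      (a has_vector_derivative a' (norm (x + t *\<^sub>R v))) (at (norm (x + t *\<^sub>R v)))"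
    and k: "\<And>t. \<bar>t\<bar> < d \<Longrightarrow>
      (k has_vector_derivative k' (norm (x + t *\<^sub>R v))) (at (norm (x + t *\<^sub>R v)))"
    and a': "(a' has_vector_derivative a'') (at r)"
    and k': "(k' has_vector_derivative k'') (at r)"
  shows "dirderiv v (dirderiv v f) y =
    ((1 - c\<^sup>2) / r) *\<^sub>R a' r + c\<^sup>2 *\<^sub>R a''
    + (2 * c) *\<^sub>R prod v (k' r) + prod x (((1 - c\<^sup>2) / r) *\<^sub>R k' r + c\<^sup>2 *\<^sub>R k'')"
proof -
  define \<rho> where "\<rho> t = norm (x + t *\<^sub>R v)" for t
  define \<rho>' where "\<rho>' t = (x \<bullet> v + t) / \<rho> t" for t
  define G' where "G' = (\<lambda>t. \<rho>' t *\<^sub>R a' (\<rho> t) + (prod (x + t *\<^sub>R v) (\<rho>' t *\<^sub>R k' (\<rho> t)) + prod v (k (\<rho> t))))"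
  have "x \<noteq> 0" and "r > 0"
    using nz[of 0] \<open>d > 0\<close> r by auto
  have \<rho>0: "\<rho> 0 = r" "\<rho>' 0 = c"
    using \<open>r > 0\<close> by (simp_all add: \<rho>_def \<rho>'_def r c)
  have "v \<bullet> v = 1"
    using v by (simp add: power2_norm_eq_inner[symmetric])
  then have \<rho>: "(\<rho> has_real_derivative \<rho>' t) (at t)" if "\<bar>t\<bar> < d" for t
    using has_real_derivative_norm_line[OF nz[OF that]]
    unfolding \<rho>'_def \<rho>_def[abs_def] by (simp add: inner_add_left)
  have "((norm x)\<^sup>2 - (x \<bullet> v)\<^sup>2) / norm x ^ 3 = (1 - c\<^sup>2) / r"
    using \<open>r > 0\<close> by (simp add: r c power2_eq_square power3_eq_cube field_simps)
  then have \<rho>': "(\<rho>' has_real_derivative (1 - c\<^sup>2) / r) (at 0)"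
    using has_real_derivative_norm_line_deriv[OF v \<open>x \<noteq> 0\<close>]
    unfolding \<rho>'_def \<rho>_def[abs_def] by simp
  note prod_rule = bounded_bilinear.has_vector_derivative[OF prod]
  have line: "((\<lambda>t. x + t *\<^sub>R v) has_vector_derivative v) (at t)" for t
    by (auto intro!: derivative_eq_intros)
  show ?thesis
  proof (rule dirderiv2_eqI[OF \<open>d > 0\<close>, where G' = G'])
    fix t :: real
    assume t: "\<bar>t\<bar> < d"
    show "f (y + t *\<^sub>R v) = a (\<rho> t) + prod (x + t *\<^sub>R v) (k (\<rho> t))"
      using f[OF t] by (simp add: \<rho>_def)
    show "((\<lambda>t. a (\<rho> t) + prod (x + t *\<^sub>R v) (k (\<rho> t))) has_vector_derivative G' t) (at t)"
      using a[OF t] k[OF t] unfolding G'_def \<rho>_def[symmetric]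
      by (intro has_vector_derivative_add prod_rule line has_vector_derivative_comp_real \<rho> t)
  next
    have at_r: "(a has_vector_derivative a' (\<rho> 0)) (at (\<rho> 0))"
      "(k has_vector_derivative k' (\<rho> 0)) (at (\<rho> 0))"
      "(a' has_vector_derivative a'') (at (\<rho> 0))" "(k' has_vector_derivative k'') (at (\<rho> 0))"
      using a[of 0] k[of 0] a' k' \<open>d > 0\<close> by (simp_all add: \<rho>_def r)
    have "(G' has_vector_derivative
        \<rho>' 0 *\<^sub>R (\<rho>' 0 *\<^sub>R a'') + ((1 - c\<^sup>2) / r) *\<^sub>R a' (\<rho> 0)
        + (prod (x + 0 *\<^sub>R v) (\<rho>' 0 *\<^sub>R (\<rho>' 0 *\<^sub>R k'') + ((1 - c\<^sup>2) / r) *\<^sub>R k' (\<rho> 0))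
           + prod v (\<rho>' 0 *\<^sub>R k' (\<rho> 0)) + prod v (\<rho>' 0 *\<^sub>R k' (\<rho> 0)))) (at 0)"
      unfolding G'_def using \<open>d > 0\<close>
      by (intro has_vector_derivative_add has_vector_derivative_scaleR prod_rule line
          has_vector_derivative_comp_real \<rho> \<rho>' at_r
          bounded_linear.has_vector_derivative[OF bounded_bilinear.bounded_linear_right[OF prod]])
        simp_all
    then show "(G' has_vector_derivative
        ((1 - c\<^sup>2) / r) *\<^sub>R a' r + c\<^sup>2 *\<^sub>R a''
        + (2 * c) *\<^sub>R prod v (k' r) + prod x (((1 - c\<^sup>2) / r) *\<^sub>R k' r + c\<^sup>2 *\<^sub>R k'')) (at 0)"
      by (rule has_vector_derivative_eq_rhs)
        (simp add: \<rho>0 power2_eq_square algebra_simps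
          bounded_bilinear.scaleR_right[OF prod] bounded_bilinear.add_right[OF prod],
         metis mult_2_right scaleR_left_distrib)
  qed
qed

lemma has_vector_derivative_div_arg:
  fixes b :: "real \<Rightarrow> 'a::real_normed_vector"
  assumes "(b has_vector_derivative b') (at s)" "s \<noteq> 0"
  shows "((\<lambda>s. (1 / s) *\<^sub>R b s) has_vector_derivative (1 / s) *\<^sub>R b' - (1 / s\<^sup>2) *\<^sub>R b s) (at s)"
  using assms by (auto intro!: derivative_eq_intros simp: power2_eq_square field_simps)

lemma has_vector_derivative_div_arg_deriv:
  fixes b b' :: "real \<Rightarrow> 'a::real_normed_vector"
  assumes "(b has_vector_derivative b' s) (at s)" "(b' has_vector_derivative b'') (at s)" "s \<noteq> 0"
  shows "((\<lambda>s. (1 / s) *\<^sub>R b' s - (1 / s\<^sup>2) *\<^sub>R b s) has_vector_derivative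
    (1 / s) *\<^sub>R b'' - (2 / s\<^sup>2) *\<^sub>R b' s + (2 / s ^ 3) *\<^sub>R b s) (at s)"
  using assms
  by (auto intro!: derivative_eq_intros simp: power2_eq_square power3_eq_cube field_simps
      simp flip: scaleR_add_left)

definition profile_domain :: "quat set \<Rightarrow> (real \<times> real) set" where
  "profile_domain U = {(q0, r). r > 0 \<and> (\<exists>\<omega>\<in>qS. qreal q0 + r *\<^sub>R \<omega> \<in> U)}"

definition has_axial_form ::
    "quat set \<Rightarrow> (quat \<Rightarrow> quat) \<Rightarrow> (real \<times> real \<Rightarrow> quat) \<Rightarrow> (real \<times> real \<Rightarrow> quat) \<Rightarrow> bool" where
  "has_axial_form U ft A B \<longleftrightarrow> (\<forall>q0 r \<omega>. r > 0 \<longrightarrow> \<omega> \<in> qS \<longrightarrow> qreal q0 + r *\<^sub>R \<omega> \<in> U \<longrightarrow>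
     ft (qreal q0 + r *\<^sub>R \<omega>) = A (q0, r) + qmult \<omega> (B (q0, r)))"

lemma profile_domainI: "r > 0 \<Longrightarrow> \<omega> \<in> qS \<Longrightarrow> qreal q0 + r *\<^sub>R \<omega> \<in> U \<Longrightarrow> (q0, r) \<in> profile_domain U"
  unfolding profile_domain_def by blast

lemma has_axial_form_imag:
  assumes ft: "has_axial_form U ft A B" and "y$0 = 0" "y \<noteq> 0" and y: "qreal q0 + y \<in> U"
  shows "(q0, norm y) \<in> profile_domain U"
    and "ft (qreal q0 + y) = A (q0, norm y) + qmult y ((1 / norm y) *\<^sub>R B (q0, norm y))"
proof -
  have \<omega>: "sgn y \<in> qS"
    using assms(2,3) by (simp add: qS_iff norm_sgn sgn_div_norm)
  have y_eq: "qreal q0 + y = qreal q0 + norm y *\<^sub>R sgn y"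
    using \<open>y \<noteq> 0\<close> by (simp add: sgn_div_norm)
  show "(q0, norm y) \<in> profile_domain U"
    using \<omega> y \<open>y \<noteq> 0\<close> unfolding y_eq by (intro profile_domainI) auto
  have "ft (qreal q0 + y) = A (q0, norm y) + qmult (sgn y) (B (q0, norm y))"
    using ft \<omega> y \<open>y \<noteq> 0\<close> unfolding has_axial_form_def y_eq by simp
  then show "ft (qreal q0 + y) = A (q0, norm y) + qmult y ((1 / norm y) *\<^sub>R B (q0, norm y))"
    by (simp add: sgn_div_norm divide_inverse bounded_bilinear.scaleR_left[OF qmult_bounded_bilinear]
        bounded_bilinear.scaleR_right[OF qmult_bounded_bilinear])
qed

lemma dirderiv2_real_axial:
  assumes "open U" and ft: "has_axial_form U ft A B"
    and A: "Ck 2 (profile_domain U) A" and B: "Ck 2 (profile_domain U) B"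
    and "r > 0" "w \<in> qS" and Q: "qreal q0 + r *\<^sub>R w \<in> U"
  shows "dirderiv (e 0) (dirderiv (e 0) ft) (qreal q0 + r *\<^sub>R w) =
    dirderiv (1, 0) (dirderiv (1, 0) A) (q0, r) + qmult w (dirderiv (1, 0) (dirderiv (1, 0) B) (q0, r))"
proof -
  obtain d where "d > 0" and ball: "ball (qreal q0 + r *\<^sub>R w) d \<subseteq> U"
    using assms(1) Q open_contains_ball by blast
  have shift: "qreal q0 + r *\<^sub>R w + t *\<^sub>R e 0 = qreal (q0 + t) + r *\<^sub>R w" for t
    by (simp add: qreal_def algebra_simps)
  have on_U: "qreal (q0 + t) + r *\<^sub>R w \<in> U" if "\<bar>t\<bar> < d" for t
    using ball that unfolding shift[symmetric] by (auto simp: dist_norm e_def)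
  have dom: "(q0, r) + t *\<^sub>R (1, 0) \<in> profile_domain U" if "\<bar>t\<bar> < d" for t
    using profile_domainI[OF \<open>r > 0\<close> \<open>w \<in> qS\<close> on_U[OF that]] by simp
  have basis: "(1::real, 0::real) \<in> Basis"
    by (simp add: Basis_prod_def)
  note A' = has_vector_derivative_Ck2_line[OF A basis dom]
    and B' = has_vector_derivative_Ck2_line[OF B basis dom]
  note qmult_w = bounded_linear.has_vector_derivative[OF
      bounded_bilinear.bounded_linear_right[OF qmult_bounded_bilinear]]
  show ?thesis
  proof (rule dirderiv2_eqI[OF \<open>d > 0\<close>])
    fix t :: real
    assume t: "\<bar>t\<bar> < d"
    show "ft (qreal q0 + r *\<^sub>R w + t *\<^sub>R e 0) =
        A ((q0, r) + t *\<^sub>R (1, 0)) + qmult w (B ((q0, r) + t *\<^sub>R (1, 0)))"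
      using ft on_U[OF t] \<open>r > 0\<close> \<open>w \<in> qS\<close> unfolding has_axial_form_def shift by simp
    show "((\<lambda>t. A ((q0, r) + t *\<^sub>R (1, 0)) + qmult w (B ((q0, r) + t *\<^sub>R (1, 0)))) has_vector_derivative
        dirderiv (1, 0) A ((q0, r) + t *\<^sub>R (1, 0)) + qmult w (dirderiv (1, 0) B ((q0, r) + t *\<^sub>R (1, 0))))
        (at t)"
      by (intro has_vector_derivative_add qmult_w A'(1)[OF t] B'(1)[OF t])
  next
    show "((\<lambda>t. dirderiv (1, 0) A ((q0, r) + t *\<^sub>R (1, 0))
        + qmult w (dirderiv (1, 0) B ((q0, r) + t *\<^sub>R (1, 0)))) has_vector_derivative
        dirderiv (1, 0) (dirderiv (1, 0) A) (q0, r) + qmult w (dirderiv (1, 0) (dirderiv (1, 0) B) (q0, r)))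
        (at 0)"
      using A'(2)[of 0] B'(2)[of 0] \<open>d > 0\<close> by (intro has_vector_derivative_add qmult_w) simp_all
  qed
qed

lemma axial_form_on_imag_line:
  assumes "open U" and real_free: "U \<inter> range qreal = {}" and ft: "has_axial_form U ft A B"
    and "w \<in> qS" and Q: "qreal q0 + r *\<^sub>R w \<in> U" and "i \<noteq> 0"
  obtains d where "d > 0"
    and "\<And>t. \<bar>t\<bar> < d \<Longrightarrow> r *\<^sub>R w + t *\<^sub>R e i \<noteq> 0"
    and "\<And>t. \<bar>t\<bar> < d \<Longrightarrow> (q0, norm (r *\<^sub>R w + t *\<^sub>R e i)) \<in> profile_domain U"
    and "\<And>t. \<bar>t\<bar> < d \<Longrightarrow> ft (qreal q0 + r *\<^sub>R w + t *\<^sub>R e i) =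
      A (q0, norm (r *\<^sub>R w + t *\<^sub>R e i))
      + qmult (r *\<^sub>R w + t *\<^sub>R e i) ((1 / norm (r *\<^sub>R w + t *\<^sub>R e i)) *\<^sub>R B (q0, norm (r *\<^sub>R w + t *\<^sub>R e i)))"
proof -
  obtain d where "d > 0" and ball: "ball (qreal q0 + r *\<^sub>R w) d \<subseteq> U"
    using assms(1) Q open_contains_ball by blast
  have on_U: "qreal q0 + (r *\<^sub>R w + t *\<^sub>R e i) \<in> U" if "\<bar>t\<bar> < d" for t
    using ball that by (auto simp: dist_norm e_def add.assoc)
  have imag: "(r *\<^sub>R w + t *\<^sub>R e i) $ 0 = 0" for t
    using \<open>w \<in> qS\<close> \<open>i \<noteq> 0\<close> by (simp add: qS_def e_def axis_def)
  have nz: "r *\<^sub>R w + t *\<^sub>R e i \<noteq> 0" if "\<bar>t\<bar> < d" for t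
    using on_U[OF that] real_free by auto
  show ?thesis
    using that[OF \<open>d > 0\<close> nz] has_axial_form_imag[OF ft imag nz on_U]
    by (simp add: add.assoc)
qed

lemma dirderiv2_imag_axial:
  assumes "open U" and "U \<inter> range qreal = {}" and ft: "has_axial_form U ft A B"
    and A: "Ck 2 (profile_domain U) A" and B: "Ck 2 (profile_domain U) B"
    and "r > 0" "w \<in> qS" and Q: "qreal q0 + r *\<^sub>R w \<in> U" and "i \<noteq> 0"
  defines "k' \<equiv> (1 / r) *\<^sub>R dirderiv (0, 1) B (q0, r) - (1 / r\<^sup>2) *\<^sub>R B (q0, r)"
    and "k'' \<equiv> (1 / r) *\<^sub>R dirderiv (0, 1) (dirderiv (0, 1) B) (q0, r)
      - (2 / r\<^sup>2) *\<^sub>R dirderiv (0, 1) B (q0, r) + (2 / r ^ 3) *\<^sub>R B (q0, r)"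
  shows "dirderiv (e i) (dirderiv (e i) ft) (qreal q0 + r *\<^sub>R w) =
    ((1 - (w$i)\<^sup>2) / r) *\<^sub>R dirderiv (0, 1) A (q0, r) + (w$i)\<^sup>2 *\<^sub>R dirderiv (0, 1) (dirderiv (0, 1) A) (q0, r)
    + (2 * w$i) *\<^sub>R qmult (e i) k' + qmult (r *\<^sub>R w) (((1 - (w$i)\<^sup>2) / r) *\<^sub>R k' + (w$i)\<^sup>2 *\<^sub>R k'')"
proof -
  obtain d where "d > 0" and nz: "\<And>t. \<bar>t\<bar> < d \<Longrightarrow> r *\<^sub>R w + t *\<^sub>R e i \<noteq> 0"
    and dom: "\<And>t. \<bar>t\<bar> < d \<Longrightarrow> (q0, norm (r *\<^sub>R w + t *\<^sub>R e i)) \<in> profile_domain U"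
    and ft_line: "\<And>t. \<bar>t\<bar> < d \<Longrightarrow> ft (qreal q0 + r *\<^sub>R w + t *\<^sub>R e i) =
      A (q0, norm (r *\<^sub>R w + t *\<^sub>R e i))
      + qmult (r *\<^sub>R w + t *\<^sub>R e i) ((1 / norm (r *\<^sub>R w + t *\<^sub>R e i)) *\<^sub>R B (q0, norm (r *\<^sub>R w + t *\<^sub>R e i)))"
    using axial_form_on_imag_line[OF assms(1-3,7-9)] by blast
  define a where "a s = A (q0, s)" for s
  define a' where "a' s = dirderiv (0, 1) A (q0, s)" for s
  define b where "b s = B (q0, s)" for s
  define b' where "b' s = dirderiv (0, 1) B (q0, s)" for s
  have basis: "(0::real, 1::real) \<in> Basis"
    by (simp add: Basis_prod_def)
  have a: "(a has_vector_derivative a' s) (at s)" and b: "(b has_vector_derivative b' s) (at s)"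
    and a': "(a' has_vector_derivative dirderiv (0, 1) (dirderiv (0, 1) A) (q0, s)) (at s)"
    and b': "(b' has_vector_derivative dirderiv (0, 1) (dirderiv (0, 1) B) (q0, s)) (at s)"
    if "(q0, s) \<in> profile_domain U" for s
    unfolding a_def a'_def b_def b'_def
    using has_vector_derivative_Ck2_line[OF A basis, of "(q0, 0)" s]
      has_vector_derivative_Ck2_line[OF B basis, of "(q0, 0)" s] that
    by simp_all
  have r_dom: "(q0, r) \<in> profile_domain U"
    using profile_domainI[OF \<open>r > 0\<close> \<open>w \<in> qS\<close> Q] .
  have "dirderiv (e i) (dirderiv (e i) ft) (qreal q0 + r *\<^sub>R w) =
    ((1 - (w$i)\<^sup>2) / r) *\<^sub>R a' r + (w$i)\<^sup>2 *\<^sub>R dirderiv (0, 1) (dirderiv (0, 1) A) (q0, r)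
    + (2 * w$i) *\<^sub>R qmult (e i) ((1 / r) *\<^sub>R b' r - (1 / r\<^sup>2) *\<^sub>R b r)
    + qmult (r *\<^sub>R w) (((1 - (w$i)\<^sup>2) / r) *\<^sub>R ((1 / r) *\<^sub>R b' r - (1 / r\<^sup>2) *\<^sub>R b r) + (w$i)\<^sup>2 *\<^sub>R k'')"
  proof (rule dirderiv2_radial[OF qmult_bounded_bilinear \<open>d > 0\<close> _ _ _ nz])
    show "norm (e i) = 1"
      by (simp add: e_def)
    show "norm (r *\<^sub>R w) = r"
      using \<open>r > 0\<close> \<open>w \<in> qS\<close> by (simp add: qS_iff)
    show "(r *\<^sub>R w) \<bullet> e i = w$i * r"
      by (simp add: inner_e)
    fix t :: real
    assume t: "\<bar>t\<bar> < d"
    show "ft (qreal q0 + r *\<^sub>R w + t *\<^sub>R e i) = a (norm (r *\<^sub>R w + t *\<^sub>R e i))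
        + qmult (r *\<^sub>R w + t *\<^sub>R e i) ((\<lambda>s. (1 / s) *\<^sub>R b s) (norm (r *\<^sub>R w + t *\<^sub>R e i)))"
      using ft_line[OF t] by (simp add: a_def b_def)
    show "(a has_vector_derivative a' (norm (r *\<^sub>R w + t *\<^sub>R e i))) (at (norm (r *\<^sub>R w + t *\<^sub>R e i)))"
      by (rule a[OF dom[OF t]])
    show "((\<lambda>s. (1 / s) *\<^sub>R b s) has_vector_derivative
        (\<lambda>s. (1 / s) *\<^sub>R b' s - (1 / s\<^sup>2) *\<^sub>R b s) (norm (r *\<^sub>R w + t *\<^sub>R e i))) (at (norm (r *\<^sub>R w + t *\<^sub>R e i)))"
      using has_vector_derivative_div_arg[OF b[OF dom[OF t]]] nz[OF t] by simp
  next
    show "(a' has_vector_derivative dirderiv (0, 1) (dirderiv (0, 1) A) (q0, r)) (at r)"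
      by (rule a'[OF r_dom])
    show "((\<lambda>s. (1 / s) *\<^sub>R b' s - (1 / s\<^sup>2) *\<^sub>R b s) has_vector_derivative k'') (at r)"
      using has_vector_derivative_div_arg_deriv[OF b[OF r_dom] b'[OF r_dom]] \<open>r > 0\<close>
      by (simp add: k''_def b'_def b_def)
  qed
  then show ?thesis
    by (simp add: k'_def a'_def b'_def b_def)
qed

lemma sum_radial_second_derivatives:
  assumes "w \<in> qS" and "r \<noteq> 0"
  shows "(\<Sum>i\<in>{1,2,3}. ((1 - (w$i)\<^sup>2) / r) *\<^sub>R a' + (w$i)\<^sup>2 *\<^sub>R a''
      + (2 * w$i) *\<^sub>R qmult (e i) k' + qmult (r *\<^sub>R w) (((1 - (w$i)\<^sup>2) / r) *\<^sub>R k' + (w$i)\<^sup>2 *\<^sub>R k''))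
    = (2 / r) *\<^sub>R a' + a'' + qmult w (4 *\<^sub>R k' + r *\<^sub>R k'')"
  (is "?lhs = _")
proof -
  note qmult_simps = bounded_bilinear.add_left[OF qmult_bounded_bilinear]
    bounded_bilinear.add_right[OF qmult_bounded_bilinear]
    bounded_bilinear.scaleR_left[OF qmult_bounded_bilinear]
    bounded_bilinear.scaleR_right[OF qmult_bounded_bilinear]
  have sum_coeff: "(\<Sum>i\<in>{1,2,3::4}. (1 - (w$i)\<^sup>2) / r) = 2 / r"
    using qS_sum_sq[OF assms(1)] by (simp add: sum_divide_distrib[symmetric] sum_subtractf)
  have "?lhs = (\<Sum>i\<in>{1,2,3}. (1 - (w$i)\<^sup>2) / r) *\<^sub>R a' + (\<Sum>i\<in>{1,2,3}. (w$i)\<^sup>2) *\<^sub>R a''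
      + qmult (2 *\<^sub>R (\<Sum>i\<in>{1,2,3}. w$i *\<^sub>R e i)) k'
      + qmult (r *\<^sub>R w) ((\<Sum>i\<in>{1,2,3}. (1 - (w$i)\<^sup>2) / r) *\<^sub>R k' + (\<Sum>i\<in>{1,2,3}. (w$i)\<^sup>2) *\<^sub>R k'')"
    by (simp add: qmult_simps algebra_simps)
  also have "\<dots> = (2 / r) *\<^sub>R a' + a'' + qmult (2 *\<^sub>R w) k' + qmult (r *\<^sub>R w) ((2 / r) *\<^sub>R k' + k'')"
    by (simp only: sum_coeff qS_sum_sq[OF assms(1)] qS_sum_e[OF assms(1)] scaleR_one)
  also have "\<dots> = (2 / r) *\<^sub>R a' + a'' + qmult w (4 *\<^sub>R k' + r *\<^sub>R k'')"
    using assms(2) by (simp add: qmult_simps add.assoc flip: scaleR_add_left)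
  finally show ?thesis .
qed

lemma laplace_axial_form:
  assumes "open U" and "U \<inter> range qreal = {}" and "has_axial_form U ft A B"
    and "Ck 2 (profile_domain U) A" and "Ck 2 (profile_domain U) B"
    and "r > 0" and "w \<in> qS" and "qreal q0 + r *\<^sub>R w \<in> U"
  shows "laplace ft (qreal q0 + r *\<^sub>R w) =
    (dirderiv (1, 0) (dirderiv (1, 0) A) (q0, r) + dirderiv (0, 1) (dirderiv (0, 1) A) (q0, r)
      + (2 / r) *\<^sub>R dirderiv (0, 1) A (q0, r))
    + qmult w (dirderiv (1, 0) (dirderiv (1, 0) B) (q0, r) + dirderiv (0, 1) (dirderiv (0, 1) B) (q0, r)
      + (1 / r\<^sup>2) *\<^sub>R ((2 * r) *\<^sub>R dirderiv (0, 1) B (q0, r) - 2 *\<^sub>R B (q0, r)))"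
proof -
  let ?Q = "qreal q0 + r *\<^sub>R w"
  define k' where "k' = (1 / r) *\<^sub>R dirderiv (0, 1) B (q0, r) - (1 / r\<^sup>2) *\<^sub>R B (q0, r)"
  define k'' where "k'' = (1 / r) *\<^sub>R dirderiv (0, 1) (dirderiv (0, 1) B) (q0, r)
      - (2 / r\<^sup>2) *\<^sub>R dirderiv (0, 1) B (q0, r) + (2 / r ^ 3) *\<^sub>R B (q0, r)"
  have "laplace ft ?Q = dirderiv (e 0) (dirderiv (e 0) ft) ?Q
      + (\<Sum>i\<in>{1,2,3}. dirderiv (e i) (dirderiv (e i) ft) ?Q)"
    by (simp add: laplace_def sum_4 ac_simps)
  also have "dirderiv (e 0) (dirderiv (e 0) ft) ?Q =
      dirderiv (1, 0) (dirderiv (1, 0) A) (q0, r) + qmult w (dirderiv (1, 0) (dirderiv (1, 0) B) (q0, r))"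
    by (rule dirderiv2_real_axial[OF assms(1,3-8)])
  also have "(\<Sum>i\<in>{1,2,3}. dirderiv (e i) (dirderiv (e i) ft) ?Q) =
      (\<Sum>i\<in>{1,2,3}. ((1 - (w$i)\<^sup>2) / r) *\<^sub>R dirderiv (0, 1) A (q0, r)
        + (w$i)\<^sup>2 *\<^sub>R dirderiv (0, 1) (dirderiv (0, 1) A) (q0, r)
        + (2 * w$i) *\<^sub>R qmult (e i) k' + qmult (r *\<^sub>R w) (((1 - (w$i)\<^sup>2) / r) *\<^sub>R k' + (w$i)\<^sup>2 *\<^sub>R k''))"
    unfolding k'_def k''_def
    by (rule sum.cong) (auto intro!: dirderiv2_imag_axial[OF assms])
  also have "\<dots> = (2 / r) *\<^sub>R dirderiv (0, 1) A (q0, r) + dirderiv (0, 1) (dirderiv (0, 1) A) (q0, r)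
      + qmult w (4 *\<^sub>R k' + r *\<^sub>R k'')"
    using assms(6,7) by (intro sum_radial_second_derivatives) simp_all
  also have "4 *\<^sub>R k' + r *\<^sub>R k'' = dirderiv (0, 1) (dirderiv (0, 1) B) (q0, r)
      + (1 / r\<^sup>2) *\<^sub>R ((2 * r) *\<^sub>R dirderiv (0, 1) B (q0, r) - 2 *\<^sub>R B (q0, r))"
    using assms(6) by (simp add: k'_def k''_def vec_eq_iff field_simps power2_eq_square power3_eq_cube)
  finally show ?thesis
    by (simp only: bounded_bilinear.add_right[OF qmult_bounded_bilinear] ac_simps)
qed

theorem theorem3p4:
  fixes U :: "quat set" and ft :: "quat \<Rightarrow> quat"
    and A B :: "real \<times> real \<Rightarrow> quat"
  assumes "open U" and "axially_symmetric U" and "U \<inter> range qreal = {}"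
    and "axially_harmonic U ft"
    and "\<forall>q0 r \<omega>. r > 0 \<longrightarrow> \<omega> \<in> qS \<longrightarrow> qreal q0 + r *\<^sub>R \<omega> \<in> U \<longrightarrow>
           ft (qreal q0 + r *\<^sub>R \<omega>) = A (q0, r) + qmult \<omega> (B (q0, r))"
    and "Ck 2 {(q0, r). r > 0 \<and> (\<exists>\<omega>\<in>qS. qreal q0 + r *\<^sub>R \<omega> \<in> U)} A"
    and "Ck 2 {(q0, r). r > 0 \<and> (\<exists>\<omega>\<in>qS. qreal q0 + r *\<^sub>R \<omega> \<in> U)} B"
  shows "\<forall>q0 r. r > 0 \<and> (\<exists>\<omega>\<in>qS. qreal q0 + r *\<^sub>R \<omega> \<in> U) \<longrightarrow>
     dirderiv (1, 0) (dirderiv (1, 0) A) (q0, r) + dirderiv (0, 1) (dirderiv (0, 1) A) (q0, r)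
       + (2 / r) *\<^sub>R dirderiv (0, 1) A (q0, r) = 0
   \<and> dirderiv (1, 0) (dirderiv (1, 0) B) (q0, r) + dirderiv (0, 1) (dirderiv (0, 1) B) (q0, r)
       + (1 / r\<^sup>2) *\<^sub>R ((2 * r) *\<^sub>R dirderiv (0, 1) B (q0, r) - 2 *\<^sub>R B (q0, r)) = 0"
proof (intro allI impI)
  fix q0 r :: real
  assume "r > 0 \<and> (\<exists>\<omega>\<in>qS. qreal q0 + r *\<^sub>R \<omega> \<in> U)"
  then obtain w where "r > 0" "w \<in> qS" and on_U: "qreal q0 + r *\<^sub>R w \<in> U"
    by blast
  have "- w \<in> qS"
    using \<open>w \<in> qS\<close> by (simp add: qS_def)
  have on_U': "qreal q0 + r *\<^sub>R (- w) \<in> U"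
    using assms(2) \<open>w \<in> qS\<close> \<open>- w \<in> qS\<close> on_U unfolding axially_symmetric_def by blast
  have harmonic: "laplace ft q = 0" if "q \<in> U" for q
    using assms(4) that unfolding axially_harmonic_def by blast
  have axial: "has_axial_form U ft A B"
    using assms(5) unfolding has_axial_form_def .
  have CA: "Ck 2 (profile_domain U) A" and CB: "Ck 2 (profile_domain U) B"
    using assms(6,7) unfolding profile_domain_def .
  note laplace = laplace_axial_form[OF assms(1,3) axial CA CB \<open>r > 0\<close>]
  define X where "X = dirderiv (1, 0) (dirderiv (1, 0) A) (q0, r) + dirderiv (0, 1) (dirderiv (0, 1) A) (q0, r)
    + (2 / r) *\<^sub>R dirderiv (0, 1) A (q0, r)"
  define Y where "Y = dirderiv (1, 0) (dirderiv (1, 0) B) (q0, r) + dirderiv (0, 1) (dirderiv (0, 1) B) (q0, r)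
    + (1 / r\<^sup>2) *\<^sub>R ((2 * r) *\<^sub>R dirderiv (0, 1) B (q0, r) - 2 *\<^sub>R B (q0, r))"
  have "X + qmult w Y = 0" and "X + qmult (- w) Y = 0"
    using laplace[OF \<open>w \<in> qS\<close> on_U] laplace[OF \<open>- w \<in> qS\<close> on_U'] harmonic[OF on_U] harmonic[OF on_U']
    unfolding X_def Y_def by simp_all
  then have "X = 0" and "Y = 0"
    using eq_0_if_qS_both_signs[OF \<open>w \<in> qS\<close>] by blast+
  then show "X = 0 \<and> Y = 0"
    by blast
qed

end
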